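(* Let $d\ge2$, let $\mu\ge0$ be a finite measure with compact support in $\mathbb{R}^d$, let $\lambda,\varepsilon>0$, $p\ge1$, and let $M\ge\inf_{\mathcal{C}}\mathcal{E}_\mu^{\lambda,\varepsilon,p}$. Then for every sequence $\{\varphi_n\}\subseteq\mathcal{C}$ with $\mathcal{E}_\mu^{\lambda,\varepsilon,p}(\varphi_n)\le M$ for all $n$, there exist $\varphi_\infty\in\mathcal{C}$ and a subsequence of $\{\varphi_n\}$ converging to $\varphi_\infty$ with respect to the metric $m$.
   Context: $\mathcal{C}$ denotes the set of curves $\varphi:[0,a]\to\mathbb{R}^d$, $a\ge 0$, that are Lipschitz with $|\varphi'|=1$ a.e.; the length $L(\varphi)$ is its total variation, which equals $a$. $\Gamma_\varphi$ is the image of $\varphi$, $d(x,\Gamma)=\inf_{y\in\Gamma}|x-y|$, and $\kappa_\varphi=\varphi''$. The functional is $\mathcal{E}_\mu^{\lambda,\varepsilon,p}(\varphi)=\int d(x,\Gamma_\varphi)^p\,d\mu+\lambda L(\varphi)+\varepsilon\int_0^{L(\varphi)}|\kappa_\varphi|^2dt$ if $\varphi\in H^2([0,L(\varphi)];\mathbb{R}^d)\cap\mathcal{C}$ and $+\infty$ otherwise (a single-point curve has curvature term $0$). For $\varphi\in\mathcal{C}$, $\Phi(\varphi):[0,1]\to\mathbb{R}^d$, $\Phi(\varphi)(t)=\varphi(tL(\varphi))$, is its constant-speed reparameterization. The metric on $\mathcal{C}$ is $$m(\varphi,\psi)=\min\big\{\|\Phi(\varphi)-\Phi(\psi)\|_{L^\infty},\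 \|\Phi(\varphi(L(\varphi)-\cdot))-\Phi(\psi)\|_{L^\infty}\big\}+|L(\varphi)-L(\psi)|.$$ *)

theory Defs
  imports "HOL-Analysis.Analysis"
begin

text \<open>A curve is represented as a pair (a, phi) with phi : [0,a] -> 'a;
  values of phi outside [0,a] are irrelevant.\<close>
type_synonym 'a curve = "real \<times> (real \<Rightarrow> 'a)"

definition curves :: "'a::euclidean_space curve set" where
  "curves = {(a, \<phi>). a \<ge> 0 \<and> (\<exists>K. K-lipschitz_on {0..a} \<phi>) \<and>
     (AE t in lborel. t \<in> {0..a} \<longrightarrow>
        (\<exists>v. (\<phi> has_vector_derivative v) (at t within {0..a}) \<and> norm v = 1))}"

definition curve_len :: "'a curve \<Rightarrow> real" where
  "curve_len c = fst c"

definition curve_image :: "'a curve \<Rightarrow> 'a set" where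
  "curve_image c = snd c ` {0..fst c}"

text \<open>kappa is a weak second derivative of phi on [0,L] lying in L^2:
  phi' is absolutely continuous (an integral of kappa) and phi is the integral of phi'.\<close>
definition H2_witness :: "real \<Rightarrow> (real \<Rightarrow> 'a::euclidean_space) \<Rightarrow> (real \<Rightarrow> 'a) \<Rightarrow> bool" where
  "H2_witness L \<phi> \<kappa> \<longleftrightarrow>
     \<kappa> \<in> borel_measurable lborel \<and>
     set_integrable lborel {0..L} \<kappa> \<and>
     set_integrable lborel {0..L} (\<lambda>t. (norm (\<kappa> t))\<^sup>2) \<and>
     (\<exists>v. set_integrable lborel {0..L} v \<and>
        (\<forall>t\<in>{0..L}. v t = v 0 + (\<integral>s\<in>{0..t}. \<kappa> s \<partial>lborel) \<and>
                     \<phi> t = \<phi> 0 + (\<integral>s\<in>{0..t}. v s \<partial>lborel)))"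

definition in_H2 :: "'a::euclidean_space curve \<Rightarrow> bool" where
  "in_H2 c \<longleftrightarrow> (\<exists>\<kappa>. H2_witness (fst c) (snd c) \<kappa>)"

text \<open>Elastic term: integral of |kappa|^2 (kappa is unique a.e., so the infimum
  over all weak second derivatives is just this value).\<close>
definition curv_energy :: "'a::euclidean_space curve \<Rightarrow> real" where
  "curv_energy c = Inf {(\<integral>t\<in>{0..fst c}. (norm (\<kappa> t))\<^sup>2 \<partial>lborel) | \<kappa>. H2_witness (fst c) (snd c) \<kappa>}"

definition energy :: "'a::euclidean_space measure \<Rightarrow> real \<Rightarrow> real \<Rightarrow> real \<Rightarrow> 'a curve \<Rightarrow> ereal" where
  "energy \<mu> lam eps p c =
     (if c \<in> curves \<and> in_H2 c
      then enn2ereal (\<integral>\<^sup>+ x. ennreal ((infdist x (curve_image c)) powr p) \<partial>\<mu>)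
           + ereal (lam * curve_len c + eps * curv_energy c)
      else \<infinity>)"

definition Phi :: "'a curve \<Rightarrow> real \<Rightarrow> 'a" where
  "Phi c t = snd c (t * fst c)"

definition Phi_rev :: "'a curve \<Rightarrow> real \<Rightarrow> 'a" where
  "Phi_rev c t = snd c (fst c - t * fst c)"

definition curve_metric :: "'a::euclidean_space curve \<Rightarrow> 'a curve \<Rightarrow> real" where
  "curve_metric c1 c2 =
     min (SUP t\<in>{0..1}. norm (Phi c1 t - Phi c2 t))
         (SUP t\<in>{0..1}. norm (Phi_rev c1 t - Phi c2 t))
     + \<bar>fst c1 - fst c2\<bar>"

end

theory Submission
  imports Defs "HOL-Complex_Analysis.Great_Picard"
begin

(* Bounded energy controls everything compactness needs: the length is at most M/lam, the elastic
   energy at most M/eps, and since mu is a nonzero finite measure concentrated on a compact set, the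
   distance term keeps the starting points bounded.  The unit tangent of an H^2 curve is 1/2-Hoelder
   with constant the elastic energy (Cauchy-Schwarz), so after rescaling the parameter to [0,1] the
   tangents form a bounded equicontinuous family; Arzela-Ascoli gives a uniformly convergent
   subsequence, along which lengths and starting points converge too.  Integrating the tangents, the
   constant-speed parametrisations converge uniformly to a curve that again has a unit tangent, and
   uniform convergence of these parametrisations together with convergence of the lengths is
   convergence for the metric m. *)

lemma norm_diff_le_of_vector_derivative_bound:
  fixes f :: "real \<Rightarrow> 'a::real_normed_vector"
  assumes "convex S" "\<And>x. x \<in> S \<Longrightarrow> (f has_vector_derivative f' x) (at x within S)"
    and "\<And>x. x \<in> S \<Longrightarrow> norm (f' x) \<le> B" and "x \<in> S" "y \<in> S"
  shows "norm (f x - f y) \<le> B * \<bar>x - y\<bar>"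
proof -
  have "norm (f x - f y) \<le> B * norm (x - y)"
  proof (rule differentiable_bound[OF assms(1) _ _ assms(4,5)])
    show "(f has_derivative (\<lambda>h. h *\<^sub>R f' z)) (at z within S)" if "z \<in> S" for z
      using assms(2)[OF that] by (simp add: has_vector_derivative_def)
    show "onorm (\<lambda>h. h *\<^sub>R f' z) \<le> B" if "z \<in> S" for z
      using assms(3)[OF that] by (simp add: onorm_scaleR_left onorm_id)
  qed
  then show ?thesis by simp
qed

lemma uniform_limit_of_vector_derivatives:
  fixes F :: "nat \<Rightarrow> real \<Rightarrow> 'a::real_normed_vector"
  assumes F': "\<And>n t. t \<in> {a..b} \<Longrightarrow> (F n has_vector_derivative F' n t) (at t within {a..b})"
    and f': "\<And>t. t \<in> {a..b} \<Longrightarrow> (f has_vector_derivative f' t) (at t within {a..b})"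
    and lim': "uniform_limit {a..b} F' f' sequentially"
    and lim_a: "(\<lambda>n. F n a) \<longlonglongrightarrow> f a"
  shows "uniform_limit {a..b} F f sequentially"
proof (rule uniform_limitI)
  fix e :: real assume "e > 0"
  define d where "d = e / (2 * (\<bar>b - a\<bar> + 1))"
  have "d > 0" using \<open>e > 0\<close> by (simp add: d_def add_nonneg_pos)
  have "\<forall>\<^sub>F n in sequentially. \<forall>t\<in>{a..b}. dist (F' n t) (f' t) < d"
    using uniform_limitD[OF lim' \<open>d > 0\<close>] .
  moreover have "\<forall>\<^sub>F n in sequentially. dist (F n a) (f a) < e / 2"
    using tendstoD[OF lim_a, of "e / 2"] \<open>e > 0\<close> by simp
  ultimately show "\<forall>\<^sub>F n in sequentially. \<forall>t\<in>{a..b}. dist (F n t) (f t) < e"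
  proof eventually_elim
    case (elim n)
    show ?case
    proof
      fix t assume t: "t \<in> {a..b}"
      have "norm ((F n t - f t) - (F n a - f a)) \<le> d * \<bar>t - a\<bar>"
      proof (rule norm_diff_le_of_vector_derivative_bound[where f = "\<lambda>t. F n t - f t"])
        show "((\<lambda>t. F n t - f t) has_vector_derivative F' n x - f' x) (at x within {a..b})"
          if "x \<in> {a..b}" for x
          using F'[OF that] f'[OF that] by (rule derivative_intros)
        show "norm (F' n x - f' x) \<le> d" if "x \<in> {a..b}" for x
          using elim(1) that by (auto simp: dist_norm less_imp_le)
      qed (use t in auto)
      also have "\<dots> \<le> d * \<bar>b - a\<bar>"
        using t \<open>d > 0\<close> by (intro mult_left_mono) auto
      also have "\<dots> < e / 2"
        using \<open>e > 0\<close> by (simp add: d_def divide_simps add_nonneg_pos mult_strict_left_mono)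
      finally show "dist (F n t) (f t) < e"
        using elim(2) norm_triangle_ineq[of "(F n t - f t) - (F n a - f a)" "F n a - f a"]
        by (simp add: dist_norm)
    qed
  qed
qed

lemma primitive_has_vector_derivative:
  fixes g :: "real \<Rightarrow> 'a::banach"
  assumes "continuous_on {a..b} g" "t \<in> {a..b}"
  shows "((\<lambda>t. X + integral {a..t} (\<lambda>s. L *\<^sub>R g s)) has_vector_derivative L *\<^sub>R g t) (at t within {a..b})"
proof -
  have "continuous_on {a..b} (\<lambda>s. L *\<^sub>R g s)"
    using assms(1) by (intro continuous_intros)
  from integral_has_vector_derivative[OF this assms(2)] show ?thesis
    using has_vector_derivative_add[OF has_vector_derivative_const] by simp
qed

lemma set_integrable_subinterval:
  fixes f :: "real \<Rightarrow> 'a::euclidean_space"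
  assumes "set_integrable lborel {a..b} f" "a \<le> c" "d \<le> b"
  shows "f integrable_on {c..d}" "(\<integral>x\<in>{c..d}. f x \<partial>lborel) = integral {c..d} f"
  using set_borel_integral_eq_integral[OF set_integrable_subset[OF assms(1)]] assms(2,3) by auto

lemma norm_integral_le_sqrt_integral_square:
  fixes f :: "real \<Rightarrow> 'a::euclidean_space"
  assumes f: "f integrable_on {s..t}" and f2: "(\<lambda>x. (norm (f x))\<^sup>2) integrable_on {s..t}"
    and le: "integral {s..t} (\<lambda>x. (norm (f x))\<^sup>2) \<le> C" and "0 < C" "s \<le> t"
  shows "norm (integral {s..t} f) \<le> sqrt (C * (t - s))"
proof (cases "s = t")
  case True
  then show ?thesis by simp
next
  case False
  \<comment> \<open>Pointwise AM-GM with the weight a that optimises the resulting bound.\<close>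
  define a where "a = sqrt ((t - s) / C)"
  have "a > 0" using False \<open>s \<le> t\<close> \<open>0 < C\<close> by (simp add: a_def)
  have amgm: "norm (f x) \<le> 1 / (2 * a) + a / 2 * (norm (f x))\<^sup>2" for x
  proof -
    have "0 \<le> (a * norm (f x) - 1)\<^sup>2" by simp
    then show ?thesis using \<open>a > 0\<close> by (simp add: field_simps power2_eq_square)
  qed
  have "norm (integral {s..t} f) \<le> integral {s..t} (\<lambda>x. 1 / (2 * a) + a / 2 * (norm (f x))\<^sup>2)"
    using f f2 amgm \<open>a > 0\<close> by (intro integral_norm_bound_integral integrable_add) auto
  also have "\<dots> = integral {s..t} (\<lambda>x. 1 / (2 * a)) + integral {s..t} (\<lambda>x. a / 2 * (norm (f x))\<^sup>2)"
    by (rule integral_add) (use f2 \<open>a > 0\<close> in auto)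
  also have "\<dots> = (t - s) / (2 * a) + a / 2 * integral {s..t} (\<lambda>x. (norm (f x))\<^sup>2)"
    using integral_mult[OF f2, of "a / 2"] \<open>s \<le> t\<close> by simp
  also have "\<dots> \<le> (t - s) / (2 * a) + a / 2 * C"
    using le \<open>a > 0\<close> by simp
  also have "\<dots> = sqrt (C * (t - s))"
  proof -
    have ts: "t - s = C * a\<^sup>2" using \<open>s \<le> t\<close> \<open>0 < C\<close> by (simp add: a_def)
    then have "C * (t - s) = (C * a)\<^sup>2"
      by (simp add: power2_eq_square algebra_simps)
    then have "sqrt (C * (t - s)) = C * a" using \<open>a > 0\<close> \<open>0 < C\<close> by simp
    then show ?thesis using ts \<open>a > 0\<close> by (simp add: field_simps power2_eq_square)
  qed
  finally show ?thesis .
qed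

lemma continuous_on_AE_mem_closed:
  fixes f :: "real \<Rightarrow> 'b::topological_space"
  assumes f: "continuous_on {a..b} f" and "a < b" "closed S"
    and ae: "AE t in lborel. t \<in> {a..b} \<longrightarrow> f t \<in> S" and t: "t \<in> {a..b}"
  shows "f t \<in> S"
proof -
  let ?U = "{a<..<b} \<inter> f -` (- S)"
  have "continuous_on {a<..<b} f"
    by (rule continuous_on_subset[OF f]) auto
  then have "open ?U"
    using \<open>closed S\<close> by (intro continuous_open_preimage) auto
  moreover have "negligible ?U"
  proof -
    obtain N where N: "{t \<in> space lborel. \<not> (t \<in> {a..b} \<longrightarrow> f t \<in> S)} \<subseteq> N"
      "emeasure lborel N = 0" "N \<in> sets lborel"
      using ae by (rule AE_E)
    then have "N \<in> null_sets lebesgue"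
      by (auto intro: null_sets_completionI)
    moreover have "?U \<subseteq> N"
      using N(1) by auto
    ultimately show ?thesis
      using negligible_iff_null_sets negligible_subset by blast
  qed
  ultimately have "?U = {}"
    using open_not_negligible by blast
  then have "{a<..<b} \<subseteq> {a..b} \<inter> f -` S"
    by auto
  moreover have "closed ({a..b} \<inter> f -` S)"
    using f \<open>closed S\<close> by (intro continuous_closed_preimage) auto
  ultimately have "closure {a<..<b} \<subseteq> {a..b} \<inter> f -` S"
    by (rule closure_minimal)
  then show ?thesis
    using t \<open>a < b\<close> by auto
qed

lemma dist_le_infdist_add:
  assumes "A \<noteq> {}" "\<And>y. y \<in> A \<Longrightarrow> dist y z \<le> B"
  shows "dist x z \<le> infdist x A + B"
proof -
  have "dist x z - B \<le> dist x y" if "y \<in> A" for y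
    using assms(2)[OF that] dist_triangle[of x z y] by simp
  then have "dist x z - B \<le> infdist x A"
    using assms(1) by (simp add: infdist_notempty cINF_greatest)
  then show ?thesis
    by simp
qed

lemma nn_integral_le_imp_ex_less:
  assumes "finite_measure \<mu>" "K \<in> sets \<mu>" "emeasure \<mu> (space \<mu> - K) = 0" "emeasure \<mu> (space \<mu>) \<noteq> 0"
    and "(\<integral>\<^sup>+ x. ennreal (f x) \<partial>\<mu>) \<le> ennreal M" "0 \<le> M"
  shows "\<exists>x\<in>K. f x < M / measure \<mu> (space \<mu>) + 1"
proof (rule ccontr)
  define m where "m = measure \<mu> (space \<mu>)"
  define D where "D = M / m + 1"
  assume "\<not> ?thesis"
  then have big: "D \<le> f x" if "x \<in> K" for x
    using that by (auto simp: D_def m_def not_less)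
  have "emeasure \<mu> (space \<mu>) = ennreal m"
    using finite_measure.emeasure_eq_measure[OF assms(1)] by (simp add: m_def)
  then have "0 < m"
    using assms(4) by (metis ennreal_0 measure_nonneg order_le_less m_def)
  have "emeasure \<mu> K = emeasure \<mu> (space \<mu> - (space \<mu> - K))"
    using sets.sets_into_space[OF assms(2)] by (metis Diff_Diff_Int Int_absorb1)
  also have "\<dots> = ennreal m"
    using emeasure_Diff_null_set[of "space \<mu> - K" \<mu> "space \<mu>"] assms(2,3) \<open>emeasure \<mu> (space \<mu>) = ennreal m\<close>
    by (simp add: null_setsI)
  finally have "ennreal D * ennreal m = (\<integral>\<^sup>+ x. ennreal D * indicator K x \<partial>\<mu>)"
    using assms(2) by (simp add: nn_integral_cmult_indicator)
  also have "\<dots> \<le> (\<integral>\<^sup>+ x. ennreal (f x) \<partial>\<mu>)"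
    using big by (intro nn_integral_mono) (auto simp: indicator_def intro!: ennreal_leI)
  also have "\<dots> \<le> ennreal M"
    by (rule assms(5))
  finally have "ennreal (D * m) \<le> ennreal M"
    using \<open>0 < m\<close> \<open>0 \<le> M\<close> by (simp add: D_def ennreal_mult add_nonneg_nonneg)
  then have "D * m \<le> M"
    using \<open>0 \<le> M\<close> by (simp add: ennreal_le_iff)
  moreover have "D * m = M + m"
    using \<open>0 < m\<close> by (simp add: D_def field_simps)
  ultimately show False
    using \<open>0 < m\<close> by linarith
qed

section \<open>Unit-speed curves and the curve metric\<close>

definition unit_tangent :: "'a::real_normed_vector curve \<Rightarrow> (real \<Rightarrow> 'a) \<Rightarrow> bool" where
  "unit_tangent c v \<longleftrightarrow> (\<forall>t\<in>{0..fst c}.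
     (snd c has_vector_derivative v t) (at t within {0..fst c}) \<and> norm (v t) = 1)"

lemma unit_tangent_lipschitz:
  assumes "unit_tangent c v" "s \<in> {0..fst c}" "t \<in> {0..fst c}"
  shows "norm (snd c s - snd c t) \<le> \<bar>s - t\<bar>"
  using norm_diff_le_of_vector_derivative_bound[of "{0..fst c}" "snd c" v 1 s t] assms
  by (auto simp: unit_tangent_def)

lemma unit_tangent_imp_curves:
  fixes c :: "'a::euclidean_space curve"
  assumes "unit_tangent c v" "0 \<le> fst c"
  shows "c \<in> curves"
proof -
  have "1-lipschitz_on {0..fst c} (snd c)"
    using unit_tangent_lipschitz[OF assms(1)] by (intro lipschitz_onI) (auto simp: dist_norm dist_real_def)
  moreover have "AE t in lborel. t \<in> {0..fst c} \<longrightarrow>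
      (\<exists>w. (snd c has_vector_derivative w) (at t within {0..fst c}) \<and> norm w = 1)"
    using assms(1) by (intro AE_I2) (auto simp: unit_tangent_def)
  ultimately show ?thesis
    using assms(2) unfolding curves_def by (cases c) auto
qed

lemma Phi_has_vector_derivative:
  assumes "unit_tangent c v" "0 \<le> fst c" "t \<in> {0..1}"
  shows "(Phi c has_vector_derivative fst c *\<^sub>R v (t * fst c)) (at t within {0..1})"
proof -
  have into: "(\<lambda>t. t * fst c) ` {0..1} \<subseteq> {0..fst c}"
    using assms(2) by (auto intro: mult_left_le_one_le)
  then have "t * fst c \<in> {0..fst c}"
    using assms(3) by blast
  have "((\<lambda>t. t * fst c) has_vector_derivative fst c) (at t within {0..1})"
    by (auto intro!: derivative_eq_intros simp: has_real_derivative_iff_has_vector_derivative[symmetric])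
  moreover have "(snd c has_vector_derivative v (t * fst c)) (at (t * fst c) within (\<lambda>t. t * fst c) ` {0..1})"
    using assms(1) \<open>t * fst c \<in> {0..fst c}\<close> into
    by (auto simp: unit_tangent_def intro: has_vector_derivative_within_subset)
  ultimately have "(snd c \<circ> (\<lambda>t. t * fst c) has_vector_derivative fst c *\<^sub>R v (t * fst c)) (at t within {0..1})"
    by (rule vector_diff_chain_within)
  moreover have "Phi c = snd c \<circ> (\<lambda>t. t * fst c)"
    by (auto simp: Phi_def)
  ultimately show ?thesis
    by simp
qed

lemma unit_tangent_rescale:
  assumes "0 \<le> L"
    and "\<And>t. t \<in> {0..1} \<Longrightarrow> (f has_vector_derivative L *\<^sub>R g t) (at t within {0..1})"
    and "\<And>t. t \<in> {0..1} \<Longrightarrow> norm (g t) = 1"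
  shows "unit_tangent (L, \<lambda>s. f (s / L)) (\<lambda>s. g (s / L))"
  unfolding unit_tangent_def fst_conv snd_conv
proof
  fix s assume s: "s \<in> {0..L}"
  then have sL: "s / L \<in> {0..1}" by (auto simp: divide_simps)
  show "((\<lambda>s. f (s / L)) has_vector_derivative g (s / L)) (at s within {0..L}) \<and> norm (g (s / L)) = 1"
  proof (cases "L = 0")
    case True
    then show ?thesis
      using s assms(3)[OF sL]
      by (simp add: has_vector_derivative_def has_derivative_within_singleton_iff bounded_linear_scaleR_left)
  next
    case False
    have "((\<lambda>s. s / L) has_vector_derivative 1 / L) (at s within {0..L})"
      using False by (auto intro!: derivative_eq_intros simp: has_real_derivative_iff_has_vector_derivative[symmetric])
    moreover have "(f has_vector_derivative L *\<^sub>R g (s / L)) (at (s / L) within (\<lambda>s. s / L) ` {0..L})"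
      by (rule has_vector_derivative_within_subset[OF assms(2)[OF sL]])
        (use assms(1) in \<open>auto simp: divide_simps\<close>)
    ultimately have "((\<lambda>s. f (s / L)) has_vector_derivative (1 / L) *\<^sub>R (L *\<^sub>R g (s / L))) (at s within {0..L})"
      by (rule vector_diff_chain_within[unfolded o_def])
    then show ?thesis
      using \<open>L \<noteq> 0\<close> assms(3)[OF sL] by simp
  qed
qed

lemma curve_metric_le:
  assumes "\<And>t. t \<in> {0..1} \<Longrightarrow> norm (Phi c1 t - Phi c2 t) \<le> e"
    and "\<And>t. t \<in> {0..1} \<Longrightarrow> norm (Phi c2 t) \<le> R"
  shows "0 \<le> curve_metric c1 c2" "curve_metric c1 c2 \<le> e + \<bar>fst c1 - fst c2\<bar>"
proof -
  define A where "A = (SUP t\<in>{0..1}. norm (Phi c1 t - Phi c2 t))"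
  define A' where "A' = (SUP t\<in>{0..1}. norm (Phi_rev c1 t - Phi c2 t))"
  \<comment> \<open>Without an upper bound the second supremum would be an unspecified real, possibly negative.\<close>
  have rev_bound: "norm (Phi_rev c1 t - Phi c2 t) \<le> e + 2 * R" if "t \<in> {0..1}" for t
  proof -
    have "Phi_rev c1 t - Phi c2 t = (Phi c1 (1 - t) - Phi c2 (1 - t)) + Phi c2 (1 - t) - Phi c2 t"
      by (simp add: Phi_def Phi_rev_def algebra_simps)
    then show ?thesis
      using assms(1)[of "1 - t"] assms(2)[of "1 - t"] assms(2)[of t] that
        norm_triangle_ineq[of "Phi c1 (1 - t) - Phi c2 (1 - t) + Phi c2 (1 - t)" "- Phi c2 t"]
        norm_triangle_ineq[of "Phi c1 (1 - t) - Phi c2 (1 - t)" "Phi c2 (1 - t)"]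
      by auto
  qed
  have "A \<le> e" unfolding A_def by (rule cSUP_least) (use assms(1) in auto)
  moreover have "0 \<le> A" unfolding A_def
    by (rule cSUP_upper2[of _ _ 0]) (use assms(1) in \<open>auto intro!: bdd_aboveI2[where M = e]\<close>)
  moreover have "0 \<le> A'" unfolding A'_def
    by (rule cSUP_upper2[of _ _ 0]) (use rev_bound in \<open>auto intro!: bdd_aboveI2[where M = "e + 2 * R"]\<close>)
  moreover have "curve_metric c1 c2 = min A A' + \<bar>fst c1 - fst c2\<bar>"
    unfolding curve_metric_def A_def A'_def ..
  ultimately show "0 \<le> curve_metric c1 c2" "curve_metric c1 c2 \<le> e + \<bar>fst c1 - fst c2\<bar>"
    by auto
qed

lemma curve_metric_tendsto_0:
  assumes "uniform_limit {0..1} (\<lambda>n. Phi (c n)) (Phi \<psi>) sequentially"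
    and "(\<lambda>n. fst (c n)) \<longlonglongrightarrow> fst \<psi>"
    and "bounded (Phi \<psi> ` {0..1})"
  shows "(\<lambda>n. curve_metric (c n) \<psi>) \<longlonglongrightarrow> 0"
proof (rule tendstoI)
  fix e :: real assume "e > 0"
  obtain R where R: "\<And>t. t \<in> {0..1} \<Longrightarrow> norm (Phi \<psi> t) \<le> R"
    using assms(3) unfolding bounded_iff by blast
  have "\<forall>\<^sub>F n in sequentially. \<forall>t\<in>{0..1}. dist (Phi (c n) t) (Phi \<psi> t) < e / 2"
    using uniform_limitD[OF assms(1), of "e / 2"] \<open>e > 0\<close> by simp
  moreover have "\<forall>\<^sub>F n in sequentially. dist (fst (c n)) (fst \<psi>) < e / 2"
    using tendstoD[OF assms(2), of "e / 2"] \<open>e > 0\<close> by simp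
  ultimately show "\<forall>\<^sub>F n in sequentially. dist (curve_metric (c n) \<psi>) 0 < e"
  proof eventually_elim
    case (elim n)
    have "0 \<le> curve_metric (c n) \<psi>" "curve_metric (c n) \<psi> \<le> e / 2 + \<bar>fst (c n) - fst \<psi>\<bar>"
      using curve_metric_le[of "c n" \<psi> "e / 2", OF _ R] elim(1) by (auto simp: dist_norm less_imp_le)
    then show ?case using elim(2) by (simp add: dist_real_def)
  qed
qed

section \<open>Curves of bounded energy\<close>

lemma integral_square_norm_nonneg: "0 \<le> (\<integral>t\<in>A. (norm (\<kappa> t))\<^sup>2 \<partial>lborel)"
  unfolding set_lebesgue_integral_def
  by (rule Bochner_Integration.integral_nonneg) (auto simp: indicator_def)

lemma curv_energy_nonneg:
  assumes "in_H2 c"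
  shows "0 \<le> curv_energy c"
  using assms unfolding curv_energy_def in_H2_def
  by (intro cInf_greatest) (auto simp: integral_square_norm_nonneg)

lemma curv_energy_less_witness:
  assumes "in_H2 c" "curv_energy c < C"
  obtains \<kappa> where "H2_witness (fst c) (snd c) \<kappa>" "(\<integral>t\<in>{0..fst c}. (norm (\<kappa> t))\<^sup>2 \<partial>lborel) < C"
proof -
  have "{(\<integral>t\<in>{0..fst c}. (norm (\<kappa> t))\<^sup>2 \<partial>lborel) | \<kappa>. H2_witness (fst c) (snd c) \<kappa>} \<noteq> {}"
    using assms(1) unfolding in_H2_def by auto
  from cInf_lessD[OF this assms(2)[unfolded curv_energy_def]] show ?thesis
    using that by auto
qed

lemma H2_witness_derivative:
  fixes \<phi> :: "real \<Rightarrow> 'a::euclidean_space"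
  assumes "H2_witness L \<phi> \<kappa>"
  obtains v where "continuous_on {0..L} v"
    "\<And>t. t \<in> {0..L} \<Longrightarrow> (\<phi> has_vector_derivative v t) (at t within {0..L})"
    "\<And>s t. 0 \<le> s \<Longrightarrow> s \<le> t \<Longrightarrow> t \<le> L \<Longrightarrow> v t - v s = integral {s..t} \<kappa>"
proof -
  from assms obtain v where ik: "set_integrable lborel {0..L} \<kappa>"
    and iv: "set_integrable lborel {0..L} v"
    and eqs: "\<And>t. t \<in> {0..L} \<Longrightarrow>
      v t = v 0 + (\<integral>s\<in>{0..t}. \<kappa> s \<partial>lborel) \<and> \<phi> t = \<phi> 0 + (\<integral>s\<in>{0..t}. v s \<partial>lborel)"
    unfolding H2_witness_def by blast
  have veq: "v t = v 0 + integral {0..t} \<kappa>" and \<phi>eq: "\<phi> t = \<phi> 0 + integral {0..t} v"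
    if "t \<in> {0..L}" for t
    using eqs[OF that] set_integrable_subinterval[OF ik, of 0 t] set_integrable_subinterval[OF iv, of 0 t] that
    by auto
  have "continuous_on {0..L} (\<lambda>t. v 0 + integral {0..t} \<kappa>)"
    using set_integrable_subinterval(1)[OF ik]
    by (intro continuous_intros indefinite_integral_continuous_1) auto
  then have "continuous_on {0..L} v"
    using veq by (metis (no_types, lifting) continuous_on_eq)
  moreover have "(\<phi> has_vector_derivative v t) (at t within {0..L})" if "t \<in> {0..L}" for t
  proof (rule has_vector_derivative_transform[OF that \<phi>eq])
    show "((\<lambda>t. \<phi> 0 + integral {0..t} v) has_vector_derivative v t) (at t within {0..L})"
      using integral_has_vector_derivative[OF \<open>continuous_on {0..L} v\<close> that]
      by (auto intro!: derivative_eq_intros)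
  qed
  moreover have "v t - v s = integral {s..t} \<kappa>" if "0 \<le> s" "s \<le> t" "t \<le> L" for s t
  proof -
    have "integral {0..s} \<kappa> + integral {s..t} \<kappa> = integral {0..t} \<kappa>"
      using Henstock_Kurzweil_Integration.integral_combine[where a = 0 and c = s and b = t and f = \<kappa>]
        set_integrable_subinterval[OF ik, of 0 t] that
      by auto
    then show ?thesis
      using veq[of s] veq[of t] that by (simp add: algebra_simps)
  qed
  ultimately show ?thesis
    using that by blast
qed

lemma H2_witness_tangent_holder:
  fixes \<phi> :: "real \<Rightarrow> 'a::euclidean_space"
  assumes W: "H2_witness L \<phi> \<kappa>" and C: "(\<integral>t\<in>{0..L}. (norm (\<kappa> t))\<^sup>2 \<partial>lborel) \<le> C" "0 < C"
  obtains v where "continuous_on {0..L} v"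
    "\<And>t. t \<in> {0..L} \<Longrightarrow> (\<phi> has_vector_derivative v t) (at t within {0..L})"
    "\<And>s t. s \<in> {0..L} \<Longrightarrow> t \<in> {0..L} \<Longrightarrow> norm (v s - v t) \<le> sqrt (C * \<bar>s - t\<bar>)"
proof -
  obtain v where v: "continuous_on {0..L} v"
    "\<And>t. t \<in> {0..L} \<Longrightarrow> (\<phi> has_vector_derivative v t) (at t within {0..L})"
    "\<And>s t. 0 \<le> s \<Longrightarrow> s \<le> t \<Longrightarrow> t \<le> L \<Longrightarrow> v t - v s = integral {s..t} \<kappa>"
    using H2_witness_derivative[OF W] by blast
  from W have ik: "set_integrable lborel {0..L} \<kappa>"
    and ik2: "set_integrable lborel {0..L} (\<lambda>t. (norm (\<kappa> t))\<^sup>2)"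
    unfolding H2_witness_def by blast+
  have holder: "norm (v t - v s) \<le> sqrt (C * (t - s))" if "0 \<le> s" "s \<le> t" "t \<le> L" for s t
  proof -
    have "integral {s..t} (\<lambda>x. (norm (\<kappa> x))\<^sup>2) \<le> integral {0..L} (\<lambda>x. (norm (\<kappa> x))\<^sup>2)"
      by (rule integral_subset_le) (use that set_integrable_subinterval(1)[OF ik2] in auto)
    also have "\<dots> \<le> C"
      using C(1) set_integrable_subinterval(2)[OF ik2, of 0 L] by simp
    finally show ?thesis
      unfolding v(3)[OF that]
      using norm_integral_le_sqrt_integral_square[OF _ _ _ C(2) that(2)]
        set_integrable_subinterval(1)[OF ik, of s t] set_integrable_subinterval(1)[OF ik2, of s t] that
      by simp
  qed
  have "norm (v s - v t) \<le> sqrt (C * \<bar>s - t\<bar>)" if "s \<in> {0..L}" "t \<in> {0..L}" for s t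
    using holder[of s t] holder[of t s] that by (cases "s \<le> t") (auto simp: norm_minus_commute)
  then show ?thesis
    using that v(1,2) by blast
qed

lemma H2_curve_unit_tangent:
  fixes \<phi> :: "real \<Rightarrow> 'a::euclidean_space"
  assumes cur: "(L, \<phi>) \<in> curves" and W: "H2_witness L \<phi> \<kappa>"
    and C: "(\<integral>t\<in>{0..L}. (norm (\<kappa> t))\<^sup>2 \<partial>lborel) \<le> C" "0 < C"
  obtains v where "unit_tangent (L, \<phi>) v"
    "\<And>s t. s \<in> {0..L} \<Longrightarrow> t \<in> {0..L} \<Longrightarrow> norm (v s - v t) \<le> sqrt (C * \<bar>s - t\<bar>)"
proof (cases "L = 0")
  case True
  \<comment> \<open>Within the singleton {0} every vector is a derivative, so any unit vector is a tangent.\<close>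
  obtain u :: 'a where "u \<in> Basis"
    using nonempty_Basis by blast
  then have "unit_tangent (L, \<phi>) (\<lambda>_. u)"
    using True by (simp add: unit_tangent_def has_vector_derivative_def
        has_derivative_within_singleton_iff bounded_linear_scaleR_left)
  then show ?thesis
    by (rule that) (use C(2) in simp)
next
  case False
  then have "0 < L"
    using cur by (simp add: curves_def)
  obtain v where v: "continuous_on {0..L} v"
    "\<And>t. t \<in> {0..L} \<Longrightarrow> (\<phi> has_vector_derivative v t) (at t within {0..L})"
    "\<And>s t. s \<in> {0..L} \<Longrightarrow> t \<in> {0..L} \<Longrightarrow> norm (v s - v t) \<le> sqrt (C * \<bar>s - t\<bar>)"
    using H2_witness_tangent_holder[OF W C] by blast
  have "AE t in lborel. t \<in> {0..L} \<longrightarrow>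
      (\<exists>w. (\<phi> has_vector_derivative w) (at t within {0..L}) \<and> norm w = 1)"
    using cur by (simp add: curves_def)
  then have "AE t in lborel. t \<in> {0..L} \<longrightarrow> norm (v t) \<in> {1}"
  proof (rule AE_mp, intro AE_I2 impI)
    fix t assume "t \<in> {0..L} \<longrightarrow> (\<exists>w. (\<phi> has_vector_derivative w) (at t within {0..L}) \<and> norm w = 1)"
      and t: "t \<in> {0..L}"
    then obtain w where "(\<phi> has_vector_derivative w) (at t within {0..L})" "norm w = 1"
      by blast
    moreover have "v t = w"
      using vector_derivative_unique_within_closed_interval[of 0 L t \<phi> "v t" w] \<open>0 < L\<close> t v(2)[OF t] calculation
      by simp
    ultimately show "norm (v t) \<in> {1}"
      by simp
  qed
  then have "norm (v t) = 1" if "t \<in> {0..L}" for t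
    using continuous_on_AE_mem_closed[of 0 L "\<lambda>t. norm (v t)" "{1}" t]
      continuous_on_norm[OF v(1)] \<open>0 < L\<close> that by simp
  then have "unit_tangent (L, \<phi>) v"
    using v(2) by (simp add: unit_tangent_def)
  then show ?thesis
    using that v(3) by blast
qed

lemma energy_le_imp_bounds:
  assumes "energy \<mu> lam eps p c \<le> ereal M" "lam > 0" "eps > 0"
  shows "in_H2 c" "fst c \<le> M / lam" "curv_energy c \<le> M / eps"
    "(\<integral>\<^sup>+ x. ennreal (infdist x (curve_image c) powr p) \<partial>\<mu>) \<le> ennreal M" "0 \<le> M"
proof -
  have c: "c \<in> curves" "in_H2 c"
    using assms(1) unfolding energy_def by (auto split: if_splits)
  then show "in_H2 c" by simp
  have "0 \<le> fst c"
    using c unfolding curves_def by auto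
  have "0 \<le> curv_energy c"
    using c curv_energy_nonneg by blast
  define X where "X = (\<integral>\<^sup>+ x. ennreal (infdist x (curve_image c) powr p) \<partial>\<mu>)"
  have le: "enn2ereal X + ereal (lam * fst c + eps * curv_energy c) \<le> ereal M"
    using assms(1) c unfolding energy_def X_def curve_len_def by auto
  then obtain x where x: "X = ennreal x" "0 \<le> x"
    by (cases X) auto
  have sum: "x + (lam * fst c + eps * curv_energy c) \<le> M"
    using le x by simp
  have "0 \<le> lam * fst c" "0 \<le> eps * curv_energy c"
    using \<open>0 \<le> fst c\<close> \<open>0 \<le> curv_energy c\<close> assms(2,3) by simp_all
  then have "lam * fst c \<le> M" "eps * curv_energy c \<le> M" "x \<le> M"
    using sum x(2) by linarith+
  then show "fst c \<le> M / lam" "curv_energy c \<le> M / eps" "X \<le> ennreal M" "0 \<le> M"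
    using assms(2,3) x by (simp_all add: pos_le_divide_eq mult.commute)
qed

lemma energy_le_imp_unit_tangent:
  fixes c :: "'a::euclidean_space curve"
  assumes "c \<in> curves" "energy \<mu> lam eps p c \<le> ereal M" "lam > 0" "eps > 0"
  shows "\<exists>v. unit_tangent c v \<and>
    (\<forall>s\<in>{0..fst c}. \<forall>t\<in>{0..fst c}. norm (v s - v t) \<le> sqrt ((M / eps + 1) * \<bar>s - t\<bar>))"
proof -
  note bounds = energy_le_imp_bounds[OF assms(2-4)]
  \<comment> \<open>curv_energy is an infimum, so a witness is only guaranteed strictly above it;
    the extra 1 also keeps the Hoelder constant positive.\<close>
  have "curv_energy c < M / eps + 1"
    using bounds(3) by simp
  then obtain \<kappa> where \<kappa>: "H2_witness (fst c) (snd c) \<kappa>"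
    "(\<integral>t\<in>{0..fst c}. (norm (\<kappa> t))\<^sup>2 \<partial>lborel) < M / eps + 1"
    by (rule curv_energy_less_witness[OF bounds(1)])
  have "0 < M / eps + 1"
    using bounds(5) assms(4) by (simp add: add_nonneg_pos)
  moreover have "(fst c, snd c) \<in> curves"
    using assms(1) by simp
  ultimately obtain v where "unit_tangent (fst c, snd c) v"
    "\<And>s t. s \<in> {0..fst c} \<Longrightarrow> t \<in> {0..fst c} \<Longrightarrow>
      norm (v s - v t) \<le> sqrt ((M / eps + 1) * \<bar>s - t\<bar>)"
    using H2_curve_unit_tangent[OF _ \<kappa>(1) less_imp_le[OF \<kappa>(2)]] by blast
  then show ?thesis
    by auto
qed

lemma unit_tangent_start_bounded:
  fixes \<mu> :: "'a::euclidean_space measure"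
  assumes "sets \<mu> = sets borel" "finite_measure \<mu>" "compact K" "K \<subseteq> cball 0 R"
    and "emeasure \<mu> (space \<mu> - K) = 0" "emeasure \<mu> (space \<mu>) \<noteq> 0"
    and c: "unit_tangent c v" "0 \<le> fst c" "fst c \<le> B" and "1 \<le> p"
    and "(\<integral>\<^sup>+ x. ennreal (infdist x (curve_image c) powr p) \<partial>\<mu>) \<le> ennreal M" "0 \<le> M"
  shows "norm (snd c 0) \<le> R + max 1 (M / measure \<mu> (space \<mu>) + 1) + B"
proof -
  define D where "D = M / measure \<mu> (space \<mu>) + 1"
  have "K \<in> sets \<mu>"
    using assms(1,3) by (simp add: compact_imp_closed)
  then obtain x where "x \<in> K" and x: "infdist x (curve_image c) powr p < D"
    using nn_integral_le_imp_ex_less[OF assms(2) _ assms(5,6,11,12)] by (auto simp: D_def)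
  have "infdist x (curve_image c) \<le> max 1 D"
  proof (cases "infdist x (curve_image c) < 1")
    case False
    then have "infdist x (curve_image c) \<le> infdist x (curve_image c) powr p"
      using powr_mono[OF \<open>1 \<le> p\<close>, of "infdist x (curve_image c)"] by simp
    then show ?thesis
      using x by simp
  qed simp
  moreover have "dist x (snd c 0) \<le> infdist x (curve_image c) + B"
  proof (rule dist_le_infdist_add)
    show "curve_image c \<noteq> {}"
      using c(2) by (auto simp: curve_image_def)
    show "dist y (snd c 0) \<le> B" if y: "y \<in> curve_image c" for y
    proof -
      obtain s where "s \<in> {0..fst c}" "y = snd c s"
        using y by (auto simp: curve_image_def)
      then show ?thesis
        using unit_tangent_lipschitz[OF c(1), of s 0] c(2,3) by (simp add: dist_norm)
    qed
  qed
  moreover have "norm x \<le> R"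
    using \<open>x \<in> K\<close> assms(4) by auto
  ultimately show ?thesis
    using norm_triangle_ineq[of x "snd c 0 - x"] by (simp add: D_def dist_norm norm_minus_commute)
qed

section \<open>Compactness\<close>

lemma rescaled_holder_bound:
  fixes w :: "real \<Rightarrow> 'a::real_normed_vector"
  assumes "0 \<le> L" "L \<le> B" "0 \<le> C"
    and holder: "\<And>s t. s \<in> {0..L} \<Longrightarrow> t \<in> {0..L} \<Longrightarrow> norm (w s - w t) \<le> sqrt (C * \<bar>s - t\<bar>)"
    and t: "t \<in> {0..1}" "y \<in> {0..1}" and "0 < e" "\<bar>t - y\<bar> < e\<^sup>2 / (C * B + 1)"
  shows "norm (w (t * L) - w (y * L)) < e"
proof -
  have "\<bar>t * L - y * L\<bar> = \<bar>t - y\<bar> * L"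
    using assms(1) by (simp add: abs_mult left_diff_distrib[symmetric])
  also have "\<dots> \<le> \<bar>t - y\<bar> * B"
    using assms(2) by (intro mult_left_mono) auto
  finally have "C * \<bar>t * L - y * L\<bar> \<le> C * (\<bar>t - y\<bar> * B)"
    using \<open>0 \<le> C\<close> by (rule mult_left_mono)
  also have "\<dots> < e\<^sup>2"
  proof -
    have "(C * B + 1) * \<bar>t - y\<bar> < e\<^sup>2"
      using assms(1-3,8) by (simp add: pos_less_divide_eq mult.commute add_nonneg_pos)
    then show ?thesis
      using abs_ge_zero[of "t - y"] by (simp add: algebra_simps)
  qed
  finally have "sqrt (C * \<bar>t * L - y * L\<bar>) < e"
    by (rule real_less_lsqrt[OF less_imp_le[OF \<open>0 < e\<close>]])
  moreover have "t * L \<in> {0..L}" "y * L \<in> {0..L}"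
    using t assms(1) by (auto intro: mult_left_le_one_le)
  ultimately show ?thesis
    using holder by (meson le_less_trans)
qed

lemma rescaled_tangents_uniform_subseq:
  fixes c :: "nat \<Rightarrow> 'a::euclidean_space curve"
  assumes len: "\<And>n. fst (c n) \<in> {0..B}"
    and tangent: "\<And>n. unit_tangent (c n) (v n)"
    and holder: "\<And>n s t. s \<in> {0..fst (c n)} \<Longrightarrow> t \<in> {0..fst (c n)} \<Longrightarrow>
      norm (v n s - v n t) \<le> sqrt (C * \<bar>s - t\<bar>)"
    and "0 \<le> C"
  obtains k :: "nat \<Rightarrow> nat" and g where "strict_mono k"
    "continuous_on {0..1} g" "\<And>t. t \<in> {0..1} \<Longrightarrow> norm (g t) = 1"
    "uniform_limit {0..1} (\<lambda>n t. v (k n) (t * fst (c (k n)))) g sequentially"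
proof -
  define G where "G n t = v n (t * fst (c n))" for n t
  have G_unit: "norm (G n t) = 1" if "t \<in> {0..1}" for n t
  proof -
    have "t * fst (c n) \<in> {0..fst (c n)}"
      using that len[of n] by (auto intro: mult_left_le_one_le)
    then show ?thesis
      using tangent[of n] unfolding G_def unit_tangent_def by blast
  qed
  then have G_le: "norm (G n t) \<le> 1" if "t \<in> {0..1}" for n t
    using that by simp
  have G_equicont: "\<exists>d>0. \<forall>n y. y \<in> {0..1} \<and> norm (t - y) < d \<longrightarrow> norm (G n t - G n y) < e"
    if "t \<in> {0..1}" "0 < e" for t e
  proof (intro exI conjI allI impI)
    show "0 < e\<^sup>2 / (C * B + 1)"
      using that len[of 0] \<open>0 \<le> C\<close> by (simp add: add_nonneg_pos)
    show "norm (G n t - G n y) < e" if "y \<in> {0..1} \<and> norm (t - y) < e\<^sup>2 / (C * B + 1)" for n y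
      unfolding G_def
      by (rule rescaled_holder_bound[where w = "v n" and L = "fst (c n)" and B = B])
        (use holder len[of n] \<open>0 \<le> C\<close> \<open>t \<in> {0..1}\<close> \<open>0 < e\<close> that in auto)
  qed
  obtain g and k :: "nat \<Rightarrow> nat" where g: "continuous_on {0..1} g" "strict_mono k"
    "\<And>e. 0 < e \<Longrightarrow> \<exists>N. \<forall>n t. n \<ge> N \<and> t \<in> {0..1} \<longrightarrow> norm (G (k n) t - g t) < e"
    using Arzela_Ascoli[OF compact_Icc G_le G_equicont] by blast
  have G_lim: "uniform_limit {0..1} (\<lambda>n. G (k n)) g sequentially"
    using g(3) unfolding uniform_limit_sequentially_iff dist_norm by metis
  have "norm (g t) = 1" if "t \<in> {0..1}" for t
  proof -
    have "(\<lambda>n. norm (G (k n) t)) \<longlonglongrightarrow> norm (g t)"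
      using tendsto_norm[OF tendsto_uniform_limitI[OF G_lim that]] .
    then show ?thesis
      using G_unit[OF that] LIMSEQ_unique[OF _ tendsto_const] by simp
  qed
  then show ?thesis
    using that g(1,2) G_lim unfolding G_def by blast
qed

lemma unit_tangents_convergent_subseq:
  fixes c :: "nat \<Rightarrow> 'a::euclidean_space curve"
  assumes len: "\<And>n. fst (c n) \<in> {0..B}"
    and start: "bounded (range (\<lambda>n. snd (c n) 0))"
    and tangent: "\<And>n. unit_tangent (c n) (v n)"
    and holder: "\<And>n s t. s \<in> {0..fst (c n)} \<Longrightarrow> t \<in> {0..fst (c n)} \<Longrightarrow>
      norm (v n s - v n t) \<le> sqrt (C * \<bar>s - t\<bar>)"
    and "0 \<le> C"
  obtains r :: "nat \<Rightarrow> nat" and L X g where "strict_mono r"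
    "(\<lambda>n. fst (c (r n))) \<longlonglongrightarrow> L" "(\<lambda>n. snd (c (r n)) 0) \<longlonglongrightarrow> X"
    "continuous_on {0..1} g" "\<And>t. t \<in> {0..1} \<Longrightarrow> norm (g t) = 1"
    "uniform_limit {0..1} (\<lambda>n t. v (r n) (t * fst (c (r n)))) g sequentially"
proof -
  have "range (\<lambda>n. (fst (c n), snd (c n) 0)) \<subseteq> {0..B} \<times> range (\<lambda>n. snd (c n) 0)"
    using len by auto
  then have "bounded (range (\<lambda>n. (fst (c n), snd (c n) 0)))"
    by (rule bounded_subset[OF bounded_Times[OF bounded_closed_interval start]])
  then obtain l r1 where r1: "strict_mono r1" "((\<lambda>n. (fst (c n), snd (c n) 0)) \<circ> r1) \<longlonglongrightarrow> l"
    using bounded_imp_convergent_subsequence by blast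
  obtain k :: "nat \<Rightarrow> nat" and g where k: "strict_mono k"
    and g: "continuous_on {0..1} g" "\<And>t. t \<in> {0..1} \<Longrightarrow> norm (g t) = 1"
      "uniform_limit {0..1} (\<lambda>n t. v (r1 (k n)) (t * fst (c (r1 (k n))))) g sequentially"
    by (rule rescaled_tangents_uniform_subseq[of "c \<circ> r1" B "v \<circ> r1" C])
      (use len tangent holder \<open>0 \<le> C\<close> in auto)
  have "((\<lambda>n. (fst (c n), snd (c n) 0)) \<circ> (r1 \<circ> k)) \<longlonglongrightarrow> l"
    using LIMSEQ_subseq_LIMSEQ[OF r1(2) k] by (simp add: o_assoc)
  then have "(\<lambda>n. fst (c ((r1 \<circ> k) n))) \<longlonglongrightarrow> fst l"
    "(\<lambda>n. snd (c ((r1 \<circ> k) n)) 0) \<longlonglongrightarrow> snd l"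
    by (auto dest: tendsto_fst tendsto_snd simp: o_def)
  moreover have "strict_mono (r1 \<circ> k)"
    using r1(1) k by (rule strict_mono_o)
  ultimately show ?thesis
    using that g unfolding o_def by blast
qed

lemma uniform_limit_Phi_of_tangents:
  fixes c :: "nat \<Rightarrow> 'a::euclidean_space curve"
  assumes tangent: "\<And>n. unit_tangent (c n) (v n)" "\<And>n. 0 \<le> fst (c n)"
    and lim: "(\<lambda>n. fst (c n)) \<longlonglongrightarrow> L" "(\<lambda>n. snd (c n) 0) \<longlonglongrightarrow> X"
    and g: "continuous_on {0..1} g" "uniform_limit {0..1} (\<lambda>n t. v n (t * fst (c n))) g sequentially"
  shows "uniform_limit {0..1} (\<lambda>n. Phi (c n)) (\<lambda>t. X + integral {0..t} (\<lambda>s. L *\<^sub>R g s)) sequentially"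
proof (rule uniform_limit_of_vector_derivatives)
  show "(Phi (c n) has_vector_derivative fst (c n) *\<^sub>R v n (t * fst (c n))) (at t within {0..1})"
    if "t \<in> {0..1}" for n t
    using Phi_has_vector_derivative[OF tangent that] .
  have "uniform_limit {0..1} (\<lambda>n t. fst (c n)) (\<lambda>t. L) sequentially"
    using lim(1) by (auto intro!: uniform_limitI elim!: eventually_mono dest: tendstoD)
  moreover have "bounded (g ` {0..1})"
    using g(1) by (intro compact_imp_bounded compact_continuous_image) auto
  moreover have "bounded ((\<lambda>t::real. L) ` {0..1})"
    by (simp add: image_constant_conv)
  ultimately show "uniform_limit {0..1} (\<lambda>n t. fst (c n) *\<^sub>R v n (t * fst (c n))) (\<lambda>t. L *\<^sub>R g t) sequentially"
    using g(2) by (intro bounded_bilinear.bounded_uniform_limit[OF bounded_bilinear_scaleR]) auto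
  show "(\<lambda>n. Phi (c n) 0) \<longlonglongrightarrow> X + integral {0..0} (\<lambda>s. L *\<^sub>R g s)"
    using lim(2) by (simp add: Phi_def)
qed (use primitive_has_vector_derivative[OF g(1)] in auto)

lemma unit_tangent_curves_convergent_subseq:
  fixes c :: "nat \<Rightarrow> 'a::euclidean_space curve"
  assumes len: "\<And>n. fst (c n) \<in> {0..B}"
    and start: "bounded (range (\<lambda>n. snd (c n) 0))"
    and tangent: "\<And>n. unit_tangent (c n) (v n)"
    and holder: "\<And>n s t. s \<in> {0..fst (c n)} \<Longrightarrow> t \<in> {0..fst (c n)} \<Longrightarrow>
      norm (v n s - v n t) \<le> sqrt (C * \<bar>s - t\<bar>)"
    and "0 \<le> C"
  shows "\<exists>\<psi>\<in>curves. \<exists>r. strict_mono r \<and> (\<lambda>n. curve_metric (c (r n)) \<psi>) \<longlonglongrightarrow> 0"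
proof -
  obtain r :: "nat \<Rightarrow> nat" and L X g where r: "strict_mono r"
    and lim: "(\<lambda>n. fst (c (r n))) \<longlonglongrightarrow> L" "(\<lambda>n. snd (c (r n)) 0) \<longlonglongrightarrow> X"
    and g: "continuous_on {0..1} g" "\<And>t. t \<in> {0..1} \<Longrightarrow> norm (g t) = 1"
      "uniform_limit {0..1} (\<lambda>n t. v (r n) (t * fst (c (r n)))) g sequentially"
    using unit_tangents_convergent_subseq[OF len start tangent holder \<open>0 \<le> C\<close>] by blast
  define f where "f t = X + integral {0..t} (\<lambda>s. L *\<^sub>R g s)" for t
  have f': "(f has_vector_derivative L *\<^sub>R g t) (at t within {0..1})" if "t \<in> {0..1}" for t
    unfolding f_def using primitive_has_vector_derivative[OF g(1) that] .
  have "0 \<le> L"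
    using lim(1) len by (auto intro: LIMSEQ_le_const)
  define \<psi> where "\<psi> = (L, \<lambda>s. f (s / L))"
  have "\<psi> \<in> curves"
    unfolding \<psi>_def using unit_tangent_rescale[OF \<open>0 \<le> L\<close> f' g(2)] \<open>0 \<le> L\<close>
    by (auto intro: unit_tangent_imp_curves)
  moreover have "uniform_limit {0..1} (\<lambda>n. Phi (c (r n))) f sequentially"
    unfolding f_def using tangent len lim g by (intro uniform_limit_Phi_of_tangents) auto
  \<comment> \<open>For L = 0 both sides are constantly X: s / 0 = 0 and the integrand vanishes.\<close>
  moreover have "Phi \<psi> = f"
    by (cases "L = 0") (auto simp: Phi_def \<psi>_def f_def fun_eq_iff)
  moreover have "bounded (f ` {0..1})"
  proof -
    have "continuous_on {0..1} f"
      unfolding continuous_on_eq_continuous_within using f' has_vector_derivative_continuous by blast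
    then show ?thesis
      by (intro compact_imp_bounded compact_continuous_image) auto
  qed
  ultimately have "(\<lambda>n. curve_metric (c (r n)) \<psi>) \<longlonglongrightarrow> 0"
    using lim(1) by (intro curve_metric_tendsto_0) (auto simp: \<psi>_def)
  then show ?thesis
    using \<open>\<psi> \<in> curves\<close> r by blast
qed

theorem lemma2p3:
  fixes \<mu> :: "'a::euclidean_space measure"
    and lam eps p M :: real
    and \<phi> :: "nat \<Rightarrow> 'a curve"
  assumes "DIM('a) \<ge> 2"
    and "sets \<mu> = sets borel"
    and "finite_measure \<mu>"
    and "\<exists>K. compact K \<and> emeasure \<mu> (space \<mu> - K) = 0"
    and "emeasure \<mu> (space \<mu>) \<noteq> 0"
    and "lam > 0" and "eps > 0" and "p \<ge> 1"
    and "(INF c\<in>curves. energy \<mu> lam eps p c) \<le> ereal M"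
    and "\<And>n. \<phi> n \<in> curves"
    and "\<And>n. energy \<mu> lam eps p (\<phi> n) \<le> ereal M"
  shows "\<exists>\<psi>\<in>curves. \<exists>r. strict_mono r \<and> (\<lambda>n. curve_metric (\<phi> (r n)) \<psi>) \<longlonglongrightarrow> 0"
proof -
  obtain K where K: "compact K" "emeasure \<mu> (space \<mu> - K) = 0"
    using assms(4) by blast
  then obtain R where "\<forall>x\<in>K. norm x \<le> R"
    using compact_imp_bounded bounded_iff by metis
  then have R: "K \<subseteq> cball 0 R"
    by auto
  note bounds = energy_le_imp_bounds[OF assms(11,6,7)]
  obtain v where v: "\<And>n. unit_tangent (\<phi> n) (v n) \<and> (\<forall>s\<in>{0..fst (\<phi> n)}. \<forall>t\<in>{0..fst (\<phi> n)}.
      norm (v n s - v n t) \<le> sqrt ((M / eps + 1) * \<bar>s - t\<bar>))"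
    using energy_le_imp_unit_tangent[OF assms(10,11,6,7)] by metis
  then have tangent: "\<And>n. unit_tangent (\<phi> n) (v n)"
    by blast
  have len: "fst (\<phi> n) \<in> {0..M / lam}" for n
    using assms(10)[of n] bounds(2)[of n] by (auto simp: curves_def)
  have "norm (snd (\<phi> n) 0) \<le> R + max 1 (M / measure \<mu> (space \<mu>) + 1) + M / lam" for n
    using unit_tangent_start_bounded[OF assms(2,3) K(1) R K(2) assms(5) tangent _ _ assms(8)] len bounds(4,5)
    by auto
  then have "bounded (range (\<lambda>n. snd (\<phi> n) 0))"
    unfolding bounded_iff by blast
  then show ?thesis
    using unit_tangent_curves_convergent_subseq[where C = "M / eps + 1", OF len _ tangent] v bounds(5) assms(7)
    by simp
qed

end
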